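(* Let $r,s,t,\ell,m$ be integers with $1 \le t \le \ell \le m$, $1 \le r < \ell$ and $1 \le s \le t$. Then $$\mathfrak w_r^{(s)}(t;\ell,m)=q^t\,\mathfrak w^{(s)}_r(t;\ell-1,m)+(q^m-q^{t-1})\,\mathfrak w^{(s)}_r(t-1;\ell-1,m)$$ and $$\mathfrak w_r(t;\ell,m)=q^t\,\mathfrak w_r(t;\ell-1,m)+(q^m-q^{t-1})\,\mathfrak w_r(t-1;\ell-1,m).$$
   Context: $q$ is a prime power. For an $a\times b$ matrix $M=(m_{ij})$ over $\mathbb{F}_q$ and $1\le r\le a$, $\tau_r(M)=m_{11}+\cdots+m_{rr}$ and $\underline{M}_r$ is the $r\times b$ matrix of the first $r$ rows of $M$. For integers $t\ge 0$ and $s\ge 1$, $\mathfrak w_r(t;a,b)$ is the number of $a\times b$ matrices $M$ over $\mathbb{F}_q$ with $\mathrm{rk}(M)=t$ and $\tau_r(M)\ne0$, and $\mathfrak w^{(s)}_r(t;a,b)$ is the number of such matrices that additionally satisfy $\mathrm{rk}(\underline{M}_r)=s$ (these counts are $0$ when no such matrices exist, e.g. when $t=0$ or $t>\min(a,b)$). *)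

theory Defs
  imports "Jordan_Normal_Form.DL_Rank"
begin

text \<open>Matrices over a finite field 'a (so q = CARD('a) is a prime power).
  Rank is the library rank (dimension of the column space).\<close>

definition mrank :: "'a::field mat \<Rightarrow> nat" where
  "mrank M = vec_space.rank (dim_row M) M"

text \<open>tau_r(M) = m_11 + ... + m_rr (0-indexed in Isabelle)\<close>
definition tau :: "nat \<Rightarrow> 'a::field mat \<Rightarrow> 'a" where
  "tau r M = (\<Sum>i<r. M $$ (i, i))"

definition top_rows :: "nat \<Rightarrow> 'a::field mat \<Rightarrow> 'a mat" where
  "top_rows r M = mat r (dim_col M) (\<lambda>(i, j). M $$ (i, j))"

definition w_count :: "'a::{finite,field} itself \<Rightarrow> nat \<Rightarrow> nat \<Rightarrow> nat \<Rightarrow> nat \<Rightarrow> nat" where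
  "w_count _ r t a b = card {M :: 'a mat. M \<in> carrier_mat a b \<and> mrank M = t \<and> tau r M \<noteq> 0}"

definition ws_count :: "'a::{finite,field} itself \<Rightarrow> nat \<Rightarrow> nat \<Rightarrow> nat \<Rightarrow> nat \<Rightarrow> nat \<Rightarrow> nat" where
  "ws_count _ r s t a b = card {M :: 'a mat. M \<in> carrier_mat a b \<and> mrank M = t \<and> tau r M \<noteq> 0
      \<and> mrank (top_rows r M) = s}"

end

theory Submission
  imports Defs
begin

text \<open>Every \<open>(k+1) \<times> m\<close> matrix is a \<open>k \<times> m\<close> matrix \<open>N\<close> with one row \<open>v\<close> appended.
  The rank stays equal to \<open>rank N\<close> if \<open>v\<close> lies in the row space of \<open>N\<close>, which has
  \<open>q ^ rank N\<close> elements, and grows by one for the remaining \<open>q^m - q ^ rank N\<close> choices of \<open>v\<close>.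
  Since \<open>r < \<ell>\<close>, the appended row does not touch the first \<open>r\<close> rows, so \<open>\<tau>\<^sub>r\<close> and the rank
  of the top \<open>r\<close> rows only depend on \<open>N\<close>; summing over \<open>N\<close> gives both recursions.
  The library rank is the column rank, so the row-space description rests on row rank =
  column rank, which follows by factoring a matrix through a basis of its row space.\<close>

context vec_space
begin

definition span_dim :: "'a vec set \<Rightarrow> nat" where
  "span_dim S = vectorspace.dim class_ring (span_vs S)"

lemma rank_eq_span_dim_cols: "rank A = span_dim (set (cols A))"
  unfolding rank_def span_dim_def ..

lemma span_eqI:
  assumes "S \<subseteq> carrier_vec n" "T \<subseteq> carrier_vec n" "S \<subseteq> span T" "T \<subseteq> span S"
  shows "span S = span T"
  using span_is_subset[OF assms(3) span_is_submodule[OF assms(2)]]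
    span_is_subset[OF assms(4) span_is_submodule[OF assms(1)]] by blast

lemma span_dim_eq_card:
  assumes S: "S \<subseteq> carrier_vec n" and U: "U \<subseteq> carrier_vec n" "finite U" "lin_indpt U"
    and span: "span U = span S"
  shows "span_dim S = card U"
proof -
  have sub: "submodule class_ring (span S) V" using span_is_submodule[OF S] .
  have vs: "vectorspace class_ring (span_vs S)"
    using field.field_axioms vectorspace_def submodule_is_module[OF sub] by metis
  have US: "U \<subseteq> span S" using in_own_span[OF U(1)] span by simp
  have "LinearCombinations.module.span class_ring (span_vs S) U = span S"
    using span_li_not_depend(1)[OF US sub] span by simp
  moreover have "LinearCombinations.module.lin_indpt class_ring (span_vs S) U"
    using span_li_not_depend(2)[OF US sub] U by simp
  ultimately have "vectorspace.basis class_ring (span_vs S) U"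
    using vectorspace.basis_def[OF vs] US by simp
  then show ?thesis unfolding span_dim_def using vectorspace.dim_basis[OF vs U(2)] by simp
qed

lemma basis_subset_exists:
  assumes S: "S \<subseteq> carrier_vec n" "finite S"
  obtains U where "U \<subseteq> S" "finite U" "lin_indpt U" "span U = span S" "span_dim S = card U"
proof -
  have "lin_indpt {}" unfolding lin_dep_def by auto
  then obtain U where U: "finite U" "maximal U (\<lambda>T. T \<subseteq> S \<and> lin_indpt T)"
    using maximal_exists_superset[of S "\<lambda>T. T \<subseteq> S \<and> lin_indpt T" "{}"] S by auto
  have US: "U \<subseteq> S" "lin_indpt U" using U(2) unfolding maximal_def by auto
  have Uc: "U \<subseteq> carrier_vec n" using US S by auto
  have "S \<subseteq> span U"
  proof
    fix s assume s: "s \<in> S"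
    show "s \<in> span U"
    proof (rule ccontr)
      assume ns: "s \<notin> span U"
      then have "s \<notin> U" using in_own_span[OF Uc] by auto
      then have "lin_indpt (insert s U)" using lin_dep_iff_in_span[OF Uc US(2)] ns s S by auto
      then have "insert s U = U" using U(2) US s unfolding maximal_def by blast
      then show False using \<open>s \<notin> U\<close> by auto
    qed
  qed
  then have "span U = span S" using span_eqI[OF Uc S(1)] US(1) in_own_span[OF S(1)] by auto
  then show thesis using that US U(1) span_dim_eq_card[OF S(1) Uc U(1) US(2)] by auto
qed

lemma span_dim_insert:
  assumes S: "S \<subseteq> carrier_vec n" "finite S" and v: "v \<in> carrier_vec n"
  shows "span_dim (insert v S) = (if v \<in> span S then span_dim S else Suc (span_dim S))"
proof -
  obtain U where U: "U \<subseteq> S" "finite U" "lin_indpt U" "span U = span S" "span_dim S = card U"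
    using basis_subset_exists[OF S] .
  have Uc: "U \<subseteq> carrier_vec n" using U S by auto
  have vS: "insert v S \<subseteq> carrier_vec n" using S v by auto
  show ?thesis
  proof (cases "v \<in> span S")
    case True
    have "insert v S \<subseteq> span S" using True in_own_span[OF S(1)] by auto
    moreover have "S \<subseteq> span (insert v S)" using in_own_span[OF vS] by auto
    ultimately have "span (insert v S) = span S" by (rule span_eqI[OF vS S(1)])
    then show ?thesis using True unfolding span_dim_def by simp
  next
    case False
    then have "v \<notin> U" using U(1) in_own_span[OF S(1)] by auto
    then have li: "lin_indpt (insert v U)"
      using lin_dep_iff_in_span[OF Uc U(3) v] False U(4) by auto
    have vU: "insert v U \<subseteq> carrier_vec n" using Uc v by auto
    have "S \<subseteq> span (insert v U)"
      using in_own_span[OF S(1)] U(4) span_is_monotone[of U "insert v U"] by blast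
    then have "span (insert v U) = span (insert v S)"
      using span_eqI[OF vU vS] U(1) in_own_span[OF vS] in_own_span[OF vU] by auto
    then have "span_dim (insert v S) = card (insert v U)"
      using span_dim_eq_card[OF vS vU] U(2) li by simp
    then show ?thesis using False U(2,5) \<open>v \<notin> U\<close> by simp
  qed
qed

lemma span_dim_le_Un:
  assumes "S \<subseteq> carrier_vec n" "finite S" "T \<subseteq> carrier_vec n" "finite T"
  shows "span_dim S \<le> span_dim (T \<union> S)"
  using assms(4,3)
proof (induction T rule: finite_induct)
  case (insert x T)
  then have "span_dim (T \<union> S) \<le> span_dim (insert x (T \<union> S))"
    using span_dim_insert[of "T \<union> S" x] assms by auto
  then show ?case using insert by auto
qed simp

lemma span_dim_mono:
  assumes "S \<subseteq> carrier_vec n" "finite S" "T \<subseteq> carrier_vec n" "finite T" "S \<subseteq> span T"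
  shows "span_dim S \<le> span_dim T"
proof -
  have "span (T \<union> S) = span T"
    using span_eqI[of "T \<union> S" T] assms in_own_span[of T] span_is_monotone[of T "T \<union> S"] by auto
  then show ?thesis using span_dim_le_Un[OF assms(1-4)] unfolding span_dim_def by simp
qed

lemma lincomb_bij_betw_span:
  assumes U: "U \<subseteq> carrier_vec n" "finite U" "lin_indpt U"
  shows "bij_betw (\<lambda>a. lincomb a U) (U \<rightarrow>\<^sub>E UNIV) (span U)"
  unfolding bij_betw_def
proof
  show "inj_on (\<lambda>a. lincomb a U) (U \<rightarrow>\<^sub>E UNIV)"
  proof (rule inj_onI)
    fix a b assume a: "a \<in> U \<rightarrow>\<^sub>E UNIV" and b: "b \<in> U \<rightarrow>\<^sub>E UNIV"
      and eq: "lincomb a U = lincomb b U"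
    have "lincomb (\<lambda>v. a v - b v) U = lincomb a U \<ominus>\<^bsub>V\<^esub> lincomb b U"
      using lincomb_diff[OF U(2,1)] .
    also have "\<dots> = 0\<^sub>v n" using eq lincomb_closed[OF U(1)] by (simp add: a_minus_def M.r_neg)
    finally have "(\<lambda>v. a v - b v) \<in> U \<rightarrow> {0}"
      using not_lindepD[OF U(3,2) subset_refl] by simp
    then show "a = b" by (intro PiE_ext[OF a b]) auto
  qed
  show "(\<lambda>a. lincomb a U) ` (U \<rightarrow>\<^sub>E UNIV) = span U"
  proof
    show "span U \<subseteq> (\<lambda>a. lincomb a U) ` (U \<rightarrow>\<^sub>E UNIV)"
    proof
      fix x assume "x \<in> span U"
      then obtain a where x: "x = lincomb a U" using finite_span[OF U(2,1)] by auto
      have "x = lincomb (restrict a U) U" unfolding x by (rule lincomb_cong) (use U in auto)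
      then show "x \<in> (\<lambda>a. lincomb a U) ` (U \<rightarrow>\<^sub>E UNIV)" by auto
    qed
  qed (use finite_span[OF U(2,1)] in auto)
qed

lemma card_span:
  assumes "finite (UNIV :: 'a set)" "R \<subseteq> carrier_vec n" "finite R"
  shows "card (span R) = card (UNIV :: 'a set) ^ span_dim R"
proof -
  obtain U where U: "U \<subseteq> R" "finite U" "lin_indpt U" "span U = span R" "span_dim R = card U"
    using basis_subset_exists[OF assms(2,3)] .
  have "card (span U) = card (U \<rightarrow>\<^sub>E (UNIV :: 'a set))"
    using bij_betw_same_card[OF lincomb_bij_betw_span] U assms(2) by auto
  then show ?thesis using U by (simp add: card_PiE)
qed

lemma card_carrier_vec:
  assumes "finite (UNIV :: 'a set)"
  shows "card (carrier_vec n :: 'a vec set) = card (UNIV :: 'a set) ^ n"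
proof -
  have E: "lin_indpt (set (unit_vecs n))" "set (unit_vecs n) \<subseteq> (carrier_vec n :: 'a vec set)"
    using unit_vecs_basis unfolding basis_def by simp_all
  then have "span_dim (set (unit_vecs n)) = n"
    using span_dim_eq_card[of "set (unit_vecs n)"] distinct_card[OF unit_vecs_distinct] by simp
  then show ?thesis using card_span[OF assms] span_unit_vecs_is_carrier by (metis List.finite_set E(2))
qed

lemma finite_carrier_vec: "finite (UNIV :: 'a set) \<Longrightarrow> finite (carrier_vec n :: 'a vec set)"
  using card_carrier_vec by (intro card_ge_0_finite) (simp add: finite_UNIV_card_ge_0)

lemma rank_mult_le_left:
  assumes C: "C \<in> carrier_mat n k" and B: "B \<in> carrier_mat k m"
  shows "rank (C * B) \<le> rank C"
proof -
  have cols: "set (cols (C * B)) \<subseteq> carrier_vec n" "set (cols C) \<subseteq> carrier_vec n"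
    using C B by (auto simp: cols_def)
  have "set (cols (C * B)) \<subseteq> span (set (cols C))"
  proof
    fix x assume "x \<in> set (cols (C * B))"
    then obtain j where j: "j < m" "x = col (C * B) j" using B by (auto simp: cols_def)
    then have "x = C *\<^sub>v col B j" "col B j \<in> carrier_vec k" using C B by auto
    then show "x \<in> span (set (cols C))"
      using col_space_eq[OF C] C B unfolding col_space_def by auto
  qed
  then show ?thesis
    unfolding rank_eq_span_dim_cols using span_dim_mono[OF cols(1) _ cols(2)] by simp
qed

lemma mat_factors_through_mat_of_rows:
  assumes A: "A \<in> carrier_mat na n" and us: "set us \<subseteq> carrier_vec n" "distinct us"
    and rows: "set (rows A) \<subseteq> span (set us)"
  obtains C where "C \<in> carrier_mat na (length us)" "A = C * mat_of_rows n us"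
proof -
  have "\<exists>c. row A i = lincomb c (set us)" if "i < na" for i
  proof -
    have "row A i \<in> span (set us)" using rows that A by (auto simp: rows_def)
    then show ?thesis using finite_span[OF _ us(1)] by auto
  qed
  then obtain c where c: "\<And>i. i < na \<Longrightarrow> row A i = lincomb (c i) (set us)" by metis
  define C where "C = mat na (length us) (\<lambda>(i, k). c i (us ! k))"
  have "A = C * mat_of_rows n us"
  proof (rule eq_matI)
    fix i j assume ij: "i < dim_row (C * mat_of_rows n us)" "j < dim_col (C * mat_of_rows n us)"
    then have "A $$ (i, j) = row A i $ j" using A by (auto simp: C_def)
    also have "\<dots> = (\<Sum>u \<in> set us. c i u * u $ j)"
      using c[of i] lincomb_index[OF _ us(1)] ij A by (auto simp: C_def)
    also have "\<dots> = (\<Sum>k < length us. c i (us ! k) * us ! k $ j)"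
      using sum.reindex_bij_betw[OF bij_betw_nth[OF us(2) refl refl], symmetric] by simp
    also have "\<dots> = (C * mat_of_rows n us) $$ (i, j)"
      using ij by (auto simp: C_def scalar_prod_def mat_of_rows_index intro!: sum.cong)
    finally show "A $$ (i, j) = (C * mat_of_rows n us) $$ (i, j)" .
  qed (use A in \<open>auto simp: C_def\<close>)
  then show thesis using that[of C] by (simp add: C_def)
qed

end

lemma rank_le_span_dim_rows:
  fixes A :: "'a::field mat"
  assumes A: "A \<in> carrier_mat na m"
  shows "vec_space.rank na A \<le> vec_space.span_dim m (set (rows A))"
proof -
  interpret Vm: vec_space "TYPE('a)" m .
  have rows: "set (rows A) \<subseteq> carrier_vec m" using A by (auto simp: rows_def)
  obtain U where U: "U \<subseteq> set (rows A)" "finite U" "Vm.lin_indpt U"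
      "Vm.span U = Vm.span (set (rows A))" "Vm.span_dim (set (rows A)) = card U"
    using Vm.basis_subset_exists[OF rows List.finite_set] .
  obtain us where us: "set us = U" "distinct us" using finite_distinct_list[OF U(2)] by blast
  have us_carrier: "set us \<subseteq> carrier_vec m" using us(1) U(1) rows by blast
  have "set (rows A) \<subseteq> Vm.span (set us)" using us(1) U(4) Vm.in_own_span[OF rows] by simp
  with Vm.mat_factors_through_mat_of_rows[OF A us_carrier us(2)]
  obtain C where C: "C \<in> carrier_mat na (length us)" "A = C * mat_of_rows m us" by blast
  have "vec_space.rank na A \<le> vec_space.rank na C"
    using vec_space.rank_mult_le_left[OF C(1) mat_of_rows_carrier(1)] C(2) by simp
  also have "\<dots> \<le> length us" using vec_space.rank_le_nc[OF C(1)] .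
  also have "\<dots> = Vm.span_dim (set (rows A))" using U(5) distinct_card[OF us(2)] us(1) by simp
  finally show ?thesis .
qed

lemma rank_transpose:
  fixes A :: "'a::field mat"
  assumes A: "A \<in> carrier_mat na m"
  shows "vec_space.rank m A\<^sup>T = vec_space.rank na A"
  using rank_le_span_dim_rows[OF A] rank_le_span_dim_rows[of "A\<^sup>T" m na] A
    vec_space.rank_eq_span_dim_cols[of na A] vec_space.rank_eq_span_dim_cols[of m "A\<^sup>T"]
  by simp

lemma mrank_eq_span_dim_rows: "mrank M = vec_space.span_dim (dim_col M) (set (rows M))"
  using rank_transpose[of M "dim_row M" "dim_col M"]
    vec_space.rank_eq_span_dim_cols[of "dim_col M" "M\<^sup>T"]
  unfolding mrank_def by simp

lemma finite_carrier_mat: "finite (carrier_mat k m :: 'a::{finite,field} mat set)"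
proof -
  have "finite (carrier_vec m :: 'a vec set)" by (rule vec_space.finite_carrier_vec) simp
  then have "finite (mat_of_rows m ` {rs. set rs \<subseteq> (carrier_vec m :: 'a vec set) \<and> length rs = k})"
    by (simp add: finite_lists_length_eq)
  moreover have "(carrier_mat k m :: 'a mat set) \<subseteq> mat_of_rows m ` {rs. set rs \<subseteq> carrier_vec m \<and> length rs = k}"
  proof
    fix M :: "'a mat" assume M: "M \<in> carrier_mat k m"
    then have "M = mat_of_rows m (rows M)" "set (rows M) \<subseteq> carrier_vec m" "length (rows M) = k"
      using mat_of_rows_rows[of M] by (auto simp: rows_def)
    then show "M \<in> mat_of_rows m ` {rs. set rs \<subseteq> carrier_vec m \<and> length rs = k}" by blast
  qed
  ultimately show ?thesis by (rule finite_subset[rotated])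
qed

definition append_row :: "'a mat \<Rightarrow> 'a vec \<Rightarrow> 'a mat" where
  "append_row N v = mat_of_rows (dim_col N) (rows N @ [v])"

lemma dim_append_row [simp]:
  "dim_row (append_row N v) = Suc (dim_row N)" "dim_col (append_row N v) = dim_col N"
  unfolding append_row_def by simp_all

lemma append_row_carrier: "N \<in> carrier_mat k m \<Longrightarrow> append_row N v \<in> carrier_mat (Suc k) m"
  unfolding carrier_mat_def by simp

lemma rows_append_row:
  "N \<in> carrier_mat k m \<Longrightarrow> v \<in> carrier_vec m \<Longrightarrow> rows (append_row N v) = rows N @ [v]"
  unfolding append_row_def by (subst rows_mat_of_rows) (auto simp: rows_def)

lemma append_row_index:
  "i < dim_row N \<Longrightarrow> j < dim_col N \<Longrightarrow> append_row N v $$ (i, j) = N $$ (i, j)"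
  unfolding append_row_def by (simp add: mat_of_rows_index nth_append)

lemma append_row_inj:
  assumes "N \<in> carrier_mat k m" "v \<in> carrier_vec m" "N' \<in> carrier_mat k m" "v' \<in> carrier_vec m"
    and "append_row N v = append_row N' v'"
  shows "N = N'" "v = v'"
proof -
  have "rows N @ [v] = rows N' @ [v']" using rows_append_row assms by metis
  then have "rows N = rows N'" "v = v'" by simp_all
  then show "N = N'" "v = v'"
    using mat_of_rows_rows[of N] mat_of_rows_rows[of N'] assms(1,3) by auto
qed

lemma append_row_surj:
  assumes M: "M \<in> carrier_mat (Suc k) m"
  obtains N v where "N \<in> carrier_mat k m" "v \<in> carrier_vec m" "M = append_row N v"
proof -
  define N where "N = mat_of_rows m (take k (rows M))"
  have rows: "set (rows M) \<subseteq> carrier_vec m" using M by (auto simp: rows_def)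
  then have N: "N \<in> carrier_mat k m" "rows N = take k (rows M)"
    using M rows_mat_of_rows[of "take k (rows M)" m] set_take_subset[of k "rows M"]
    by (auto simp: N_def)
  have "rows M = take k (rows M) @ [row M k]"
    using M by (simp add: rows_def)
  then have "M = append_row N (row M k)"
    using N M mat_of_rows_rows[of M] by (simp add: append_row_def)
  then show thesis by (rule that[OF N(1), rotated]) (use M in auto)
qed

context vec_space
begin

lemma mrank_append_row:
  assumes N: "N \<in> carrier_mat k n" and v: "v \<in> carrier_vec n"
  shows "mrank (append_row N v) = (if v \<in> row_space N then mrank N else Suc (mrank N))"
proof -
  have rows: "set (rows N) \<subseteq> carrier_vec n" using N by (auto simp: rows_def)
  have "mrank (append_row N v) = span_dim (insert v (set (rows N)))"
    using mrank_eq_span_dim_rows[of "append_row N v"] rows_append_row[OF N v] N by simp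
  then show ?thesis
    using span_dim_insert[OF rows _ v] mrank_eq_span_dim_rows[of N] N
    by (simp add: row_space_def)
qed

lemma card_mrank_append_row:
  fixes N :: "'a mat"
  assumes "finite (UNIV :: 'a set)" and N: "N \<in> carrier_mat k n"
  shows "card {v \<in> carrier_vec n. mrank (append_row N v) = t}
    = (if t = mrank N then card (UNIV :: 'a set) ^ t
       else if t = Suc (mrank N) then card (UNIV :: 'a set) ^ n - card (UNIV :: 'a set) ^ mrank N
       else 0)"
proof -
  have rows: "set (rows N) \<subseteq> carrier_vec n" using N by (auto simp: rows_def)
  have sub: "row_space N \<subseteq> carrier_vec n"
    unfolding row_space_def using span_is_subset2[OF rows] by simp
  have card: "card (row_space N) = card (UNIV :: 'a set) ^ mrank N"
    using card_span[OF assms(1) rows] mrank_eq_span_dim_rows[of N] N by (simp add: row_space_def)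
  have fin: "finite (carrier_vec n :: 'a vec set)" using finite_carrier_vec[OF assms(1)] .
  have "{v \<in> carrier_vec n. mrank (append_row N v) = t}
    = (if t = mrank N then row_space N
       else if t = Suc (mrank N) then carrier_vec n - row_space N else {})"
    using mrank_append_row[OF N] sub by (auto split: if_splits)
  then show ?thesis
    using card card_carrier_vec[OF assms(1)] card_Diff_subset[OF finite_subset[OF sub fin] sub]
    by simp
qed

end

lemma card_carrier_mat_Suc:
  fixes Q :: "'a::{finite,field} mat \<Rightarrow> bool"
  shows "card {M \<in> carrier_mat (Suc k) m. Q M}
    = (\<Sum>N\<in>carrier_mat k m. card {v \<in> carrier_vec m. Q (append_row N v)})"
proof -
  define fibre where "fibre N = {v \<in> carrier_vec m. Q (append_row N v)}" for N :: "'a mat"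
  have "{M \<in> carrier_mat (Suc k) m. Q M} = (\<lambda>(N, v). append_row N v) ` Sigma (carrier_mat k m) fibre"
  proof (intro equalityI subsetI)
    fix M assume "M \<in> {M \<in> carrier_mat (Suc k) m. Q M}"
    then obtain N v where "N \<in> carrier_mat k m" "v \<in> carrier_vec m" "M = append_row N v" "Q M"
      using append_row_surj by blast
    then show "M \<in> (\<lambda>(N, v). append_row N v) ` Sigma (carrier_mat k m) fibre"
      unfolding fibre_def by force
  qed (auto simp: fibre_def append_row_carrier)
  moreover have "inj_on (\<lambda>(N, v). append_row N v) (Sigma (carrier_mat k m) fibre)"
    by (rule inj_onI) (auto simp: fibre_def dest: append_row_inj)
  moreover have "finite (fibre N)" for N
    unfolding fibre_def by (rule finite_subset[OF _ vec_space.finite_carrier_vec]) auto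
  ultimately have "card {M \<in> carrier_mat (Suc k) m. Q M} = (\<Sum>N\<in>carrier_mat k m. card (fibre N))"
    by (simp add: card_image card_SigmaI[OF finite_carrier_mat])
  then show ?thesis by (simp add: fibre_def)
qed

lemma card_mrank_append_row_split:
  fixes P :: "'a::{finite,field} mat \<Rightarrow> bool"
  assumes P: "\<And>N v. N \<in> carrier_mat k m \<Longrightarrow> v \<in> carrier_vec m \<Longrightarrow> P (append_row N v) = P N"
    and t: "1 \<le> t"
  defines "q \<equiv> card (UNIV :: 'a set)"
  shows "card {M \<in> carrier_mat (Suc k) m. mrank M = t \<and> P M}
    = q ^ t * card {N \<in> carrier_mat k m. mrank N = t \<and> P N}
      + (q ^ m - q ^ (t - 1)) * card {N \<in> carrier_mat k m. mrank N = t - 1 \<and> P N}"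
proof -
  have fibre: "card {v \<in> carrier_vec m. mrank (append_row N v) = t \<and> P (append_row N v)}
      = (if mrank N = t \<and> P N then q ^ t else 0)
        + (if mrank N = t - 1 \<and> P N then q ^ m - q ^ (t - 1) else 0)"
    if N: "N \<in> carrier_mat k m" for N
  proof -
    interpret vec_space "TYPE('a)" m .
    have "{v \<in> carrier_vec m. mrank (append_row N v) = t \<and> P (append_row N v)}
      = (if P N then {v \<in> carrier_vec m. mrank (append_row N v) = t} else {})"
      using P[OF N] by auto
    then show ?thesis using card_mrank_append_row[OF _ N, of t] t by (auto simp: q_def)
  qed
  have "card {M \<in> carrier_mat (Suc k) m. mrank M = t \<and> P M}
    = (\<Sum>N\<in>carrier_mat k m. (if mrank N = t \<and> P N then q ^ t else 0)
        + (if mrank N = t - 1 \<and> P N then q ^ m - q ^ (t - 1) else 0))"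
    unfolding card_carrier_mat_Suc by (rule sum.cong) (simp_all add: fibre)
  then show ?thesis
    by (simp add: sum.distrib sum.inter_filter[OF finite_carrier_mat, symmetric] mult.commute)
qed

lemma tau_append_row:
  "N \<in> carrier_mat k m \<Longrightarrow> r \<le> k \<Longrightarrow> r \<le> m \<Longrightarrow> tau r (append_row N v) = tau r N"
  unfolding tau_def by (intro sum.cong) (auto simp: append_row_index)

lemma top_rows_append_row:
  "N \<in> carrier_mat k m \<Longrightarrow> r \<le> k \<Longrightarrow> top_rows r (append_row N v) = top_rows r N"
  unfolding top_rows_def by (intro eq_matI) (auto simp: append_row_index append_row_carrier)

theorem mainTheorem14:
  fixes F :: "'a::{finite,field} itself" and r s t l m :: nat
  defines "q \<equiv> card (UNIV :: 'a set)"
  assumes "1 \<le> t" "t \<le> l" "l \<le> m" "1 \<le> r" "r < l" "1 \<le> s" "s \<le> t"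
  shows "ws_count F r s t l m
           = q ^ t * ws_count F r s t (l - 1) m + (q ^ m - q ^ (t - 1)) * ws_count F r s (t - 1) (l - 1) m
         \<and> w_count F r t l m
           = q ^ t * w_count F r t (l - 1) m + (q ^ m - q ^ (t - 1)) * w_count F r (t - 1) (l - 1) m"
proof -
  obtain k where l: "l = Suc k" using \<open>r < l\<close> by (cases l) auto
  have r: "r \<le> k" "r \<le> m" using assms l by auto
  have "ws_count F r s t (Suc k) m
      = q ^ t * ws_count F r s t k m + (q ^ m - q ^ (t - 1)) * ws_count F r s (t - 1) k m"
    unfolding ws_count_def q_def
    by (rule card_mrank_append_row_split)
      (use \<open>1 \<le> t\<close> in \<open>simp_all add: tau_append_row[OF _ r] top_rows_append_row[OF _ r(1)]\<close>)
  moreover have "w_count F r t (Suc k) m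
      = q ^ t * w_count F r t k m + (q ^ m - q ^ (t - 1)) * w_count F r (t - 1) k m"
    unfolding w_count_def q_def
    by (rule card_mrank_append_row_split) (use \<open>1 \<le> t\<close> in \<open>simp_all add: tau_append_row[OF _ r]\<close>)
  ultimately show ?thesis unfolding l by simp
qed
end
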